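(* Let $k$ be a field with $\operatorname{char}(k)\nmid(d+1)!$, $V$ an $n$-dimensional $k$-vector space, $S=\operatorname{Sym}V$. Let $f\in S_{d+1}$ satisfy $\dim_k\langle\nabla f\rangle=n$. Then $f$ is a direct sum if and only if $\nabla f\in\operatorname{Grass}(n,S_d)$ is a direct sum if and only if $\nabla f\in\operatorname{Grass}(n,S_d)$ is a balanced direct sum.
   Context: For $f\in S_{d+1}$ and a basis $x_1,\dots,x_n$ of $V$, $\langle\nabla f\rangle$ is the $k$-span of $\partial f/\partial x_1,\dots,\partial f/\partial x_n$ in $S_d$, and when this has dimension $n$, $\nabla f$ is the corresponding point of $\operatorname{Grass}(n,S_d)$. A form $f$ is a direct sum if there is a decomposition $V=U\oplus W$ and nonzero $f_1\in\operatorname{Sym}^{d+1}U$, $f_2\in\operatorname{Sym}^{d+1}W$ with $f=f_1+f_2$. An $m$-dimensional subspace $L\subset\operatorname{Sym}^dV$ is a direct sum if there is a non-trivial decomposition $V=U\oplus W$ and subspaces $L_1\subset\operatorname{Sym}^dU$, $L_2\subset\operatorname{Sym}^dW$ of dimensions $m_1+m_2=m$ with $L=L_1+L_2$; it is a balanced direct sum if moreover $m_1=\dim_kU$, $m_2=\dim_kW$. *)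

theory Defs
  imports Main HOL.Vector_Spaces "HOL-Library.Poly_Mapping"
begin

text \<open>Polynomials in the variables indexed by the finite type 'n (a basis x_i of V)
  with coefficients in 'k: S = Sym V = k[x_i].  Monomials are exponent vectors.\<close>

type_synonym ('n, 'k) mpoly = "('n \<Rightarrow>\<^sub>0 nat) \<Rightarrow>\<^sub>0 'k"

definition psmult :: "'k::field \<Rightarrow> ('n, 'k) mpoly \<Rightarrow> ('n, 'k) mpoly" where
  "psmult c p = Poly_Mapping.map (\<lambda>x. c * x) p"

abbreviation pspan :: "('n, 'k::field) mpoly set \<Rightarrow> ('n, 'k) mpoly set" where
  "pspan \<equiv> module.span psmult"

abbreviation psubspace :: "('n, 'k::field) mpoly set \<Rightarrow> bool" where
  "psubspace \<equiv> module.subspace psmult"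

abbreviation pdim :: "('n, 'k::field) mpoly set \<Rightarrow> nat" where
  "pdim \<equiv> vector_space.dim psmult"

definition mono_deg :: "('n \<Rightarrow>\<^sub>0 nat) \<Rightarrow> nat" where
  "mono_deg a = (\<Sum>i\<in>Poly_Mapping.keys a. Poly_Mapping.lookup a i)"

definition Sdeg :: "nat \<Rightarrow> ('n, 'k::field) mpoly set" where
  "Sdeg m = {p. \<forall>a\<in>Poly_Mapping.keys p. mono_deg a = m}"

definition pd :: "'n \<Rightarrow> ('n, 'k::field) mpoly \<Rightarrow> ('n, 'k) mpoly" where
  "pd i p = (\<Sum>a\<in>Poly_Mapping.keys p. Poly_Mapping.single (a - Poly_Mapping.single i 1)
                              (of_nat (Poly_Mapping.lookup a i) * Poly_Mapping.lookup p a))"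

definition grad_span :: "('n, 'k::field) mpoly \<Rightarrow> ('n, 'k) mpoly set" where
  "grad_span f = pspan (range (\<lambda>i. pd i f))"

text \<open>Sym^m U for a subspace U of V = S_1 (as a subspace of S_m).\<close>
definition symp :: "('n, 'k::field) mpoly set \<Rightarrow> nat \<Rightarrow> ('n, 'k) mpoly set" where
  "symp U m = pspan {prod_list ls | ls. length ls = m \<and> set ls \<subseteq> U}"

definition setsum :: "('n, 'k::field) mpoly set \<Rightarrow> ('n, 'k) mpoly set \<Rightarrow> ('n, 'k) mpoly set" where
  "setsum A B = {a + b | a b. a \<in> A \<and> b \<in> B}"

text \<open>V = U \<oplus> W, where V = S_1 is the space of linear forms.\<close>
definition vdecomp :: "('n, 'k::field) mpoly set \<Rightarrow> ('n, 'k) mpoly set \<Rightarrow> bool" where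
  "vdecomp U W \<longleftrightarrow> psubspace U \<and> psubspace W \<and> U \<subseteq> Sdeg 1 \<and> W \<subseteq> Sdeg 1 \<and>
     U \<inter> W = {0} \<and> setsum U W = Sdeg 1"

definition form_direct_sum :: "nat \<Rightarrow> ('n, 'k::field) mpoly \<Rightarrow> bool" where
  "form_direct_sum d f \<longleftrightarrow> (\<exists>U W f1 f2. vdecomp U W \<and>
      f1 \<in> symp U (d+1) \<and> f2 \<in> symp W (d+1) \<and> f1 \<noteq> 0 \<and> f2 \<noteq> 0 \<and> f = f1 + f2)"

definition subsp_direct_sum :: "nat \<Rightarrow> ('n, 'k::field) mpoly set \<Rightarrow> bool" where
  "subsp_direct_sum d L \<longleftrightarrow> (\<exists>U W L1 L2. vdecomp U W \<and> U \<noteq> {0} \<and> W \<noteq> {0} \<and>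
      psubspace L1 \<and> psubspace L2 \<and> L1 \<subseteq> symp U d \<and> L2 \<subseteq> symp W d \<and>
      pdim L1 + pdim L2 = pdim L \<and> L = setsum L1 L2)"

definition subsp_balanced_direct_sum :: "nat \<Rightarrow> ('n, 'k::field) mpoly set \<Rightarrow> bool" where
  "subsp_balanced_direct_sum d L \<longleftrightarrow> (\<exists>U W L1 L2. vdecomp U W \<and> U \<noteq> {0} \<and> W \<noteq> {0} \<and>
      psubspace L1 \<and> psubspace L2 \<and> L1 \<subseteq> symp U d \<and> L2 \<subseteq> symp W d \<and>
      pdim L1 + pdim L2 = pdim L \<and> L = setsum L1 L2 \<and>
      pdim L1 = pdim U \<and> pdim L2 = pdim W)"

end

theory Submission
  imports Defs
begin

(* If f = f1 + f2 with f1 in Sym U and f2 in Sym W, the partials of f are the partials of f1 and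
   of f2; these lie in Sym^d U and Sym^d W, which meet only in 0 by Euler's identity, and span
   spaces of dimension at most dim U and dim W.  As dim U + dim W = n, a gradient of dimension n
   forces both bounds to be attained.

   Conversely, if the gradient lies in Sym^d U + Sym^d W, then for d >= 2 every derivative of f
   in a direction annihilating W lies in Sym^d U (its second derivatives land in
   Sym^(d-1) U /\ Sym^(d-1) W = 0), and Euler's identity, with x_i and the partials split along
   V = U (+) W, reassembles f as f1 + f2.  A quadratic form with n >= 2 is split by completing
   the square: f = l^2 / (2 l(v)) + f2, where l is the derivative of f in a direction v with
   nonzero second derivative and f2 is a quadratic form in the linear forms vanishing at v.
   For d = 0 the gradient spans at most a line, so n = 1 and no decomposition exists. *)

section \<open>Polynomials as a vector space; partial derivatives\<close>

lemma psmult_conv_mult: "psmult c p = Poly_Mapping.single 0 c * p"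
  unfolding psmult_def by (rule mult_map_scale_conv_mult)

interpretation pvec: vector_space "psmult :: 'k::field \<Rightarrow> ('n, 'k) mpoly \<Rightarrow> ('n, 'k) mpoly"
proof
  fix a b :: 'k and x y :: "('n, 'k) mpoly"
  show "psmult a (x + y) = psmult a x + psmult a y" by (simp add: psmult_conv_mult distrib_left)
  show "psmult (a + b) x = psmult a x + psmult b x" by (simp add: psmult_conv_mult single_add distrib_right)
  show "psmult a (psmult b x) = psmult (a * b) x" by (simp add: psmult_conv_mult mult_single flip: mult.assoc)
  show "psmult 1 x = x" by (simp add: psmult_conv_mult)
qed

lemma lookup_psmult: "Poly_Mapping.lookup (psmult c p) a = c * Poly_Mapping.lookup p a"
  by (simp add: psmult_def map.rep_eq when_def)

lemma psmult_mult_left: "psmult c p * q = psmult c (p * q)"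
  by (simp add: psmult_conv_mult mult.assoc)

lemma psmult_mult_right: "p * psmult c q = psmult c (p * q)"
  by (simp add: psmult_conv_mult mult.left_commute)

lemma psmult_sum: "psmult c (sum g A) = (\<Sum>a\<in>A. psmult c (g a))"
  by (simp add: psmult_conv_mult sum_distrib_left)

lemma psmult_two: "psmult 2 x = x + x"
  using pvec.scale_left_distrib[of 1 1 x] by simp

definition mono_var :: "'n \<Rightarrow> ('n \<Rightarrow>\<^sub>0 nat)" where
  "mono_var i = Poly_Mapping.single i 1"

definition mvar :: "'n \<Rightarrow> ('n, 'k::field) mpoly" where
  "mvar i = Poly_Mapping.single (mono_var i) 1"

definition lin_coeff :: "('n, 'k::field) mpoly \<Rightarrow> 'n \<Rightarrow> 'k" where
  "lin_coeff m i = Poly_Mapping.lookup m (mono_var i)"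

lemma lookup_mono_var: "Poly_Mapping.lookup (mono_var i) j = (if i = j then 1 else 0)"
  by (simp add: mono_var_def lookup_single)

lemma mono_var_eq_iff: "mono_var i = mono_var j \<longleftrightarrow> i = j"
  by (metis lookup_mono_var zero_neq_one)

lemma lookup_minus_nat:
  "Poly_Mapping.lookup (a - b) k = Poly_Mapping.lookup a k - Poly_Mapping.lookup (b :: 'n \<Rightarrow>\<^sub>0 nat) k"
  by (simp add: minus_poly_mapping.rep_eq)

lemma diff_mono_var_add: "Poly_Mapping.lookup a i \<noteq> 0 \<Longrightarrow> (a - mono_var i) + mono_var i = a"
  by (rule poly_mapping_eqI) (auto simp: lookup_add lookup_minus_nat lookup_mono_var)

lemma add_mono_var_diff: "(b + mono_var i) - mono_var i = b"
  by (rule poly_mapping_eqI) (auto simp: lookup_add lookup_minus_nat lookup_mono_var)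

lemma mono_var_add_eq_iff:
  "mono_var i + a = b \<longleftrightarrow> a = b - mono_var i \<and> Poly_Mapping.lookup b i \<noteq> 0"
proof
  assume h: "mono_var i + a = b"
  then show "a = b - mono_var i \<and> Poly_Mapping.lookup b i \<noteq> 0"
    using add_mono_var_diff[of a i] by (auto simp: add.commute lookup_add lookup_mono_var)
next
  assume "a = b - mono_var i \<and> Poly_Mapping.lookup b i \<noteq> 0"
  then show "mono_var i + a = b" using diff_mono_var_add[of b i] by (simp add: add.commute)
qed

lemma poly_mapping_sum_single:
  "p = (\<Sum>a\<in>Poly_Mapping.keys p. Poly_Mapping.single a (Poly_Mapping.lookup p a))"
  by (rule poly_mapping_eqI) (simp add: lookup_sum lookup_single when_def sum.delta in_keys_iff)

lemma single_sum: "Poly_Mapping.single k (sum g A) = (\<Sum>a\<in>A. Poly_Mapping.single k (g a))"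
  by (induction A rule: infinite_finite_induct) (simp_all add: single_add)

lemma lookup_pd:
  "Poly_Mapping.lookup (pd i p) b =
     of_nat (Poly_Mapping.lookup b i + 1) * Poly_Mapping.lookup p (b + mono_var i)"
proof -
  have summand: "(of_nat (Poly_Mapping.lookup a i) * Poly_Mapping.lookup p a when a - mono_var i = b) =
    (if a = b + mono_var i then of_nat (Poly_Mapping.lookup b i + 1) * Poly_Mapping.lookup p a else 0)"
    for a
  proof (cases "a = b + mono_var i")
    case False
    then have "Poly_Mapping.lookup a i = 0 \<or> a - mono_var i \<noteq> b"
      using diff_mono_var_add by metis
    with False show ?thesis by auto
  qed (simp add: add_mono_var_diff lookup_add lookup_mono_var)
  have "Poly_Mapping.lookup (pd i p) b =
      (\<Sum>a\<in>Poly_Mapping.keys p. of_nat (Poly_Mapping.lookup a i) * Poly_Mapping.lookup p a when a - mono_var i = b)"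
    by (simp add: pd_def lookup_sum lookup_single mono_var_def)
  also have "\<dots> = of_nat (Poly_Mapping.lookup b i + 1) * Poly_Mapping.lookup p (b + mono_var i)"
    unfolding summand by (auto simp: sum.delta in_keys_iff)
  finally show ?thesis .
qed

lemma pd_add: "pd i (p + q) = pd i p + pd i q"
  by (rule poly_mapping_eqI) (simp add: lookup_pd lookup_add distrib_left)

lemma pd_psmult: "pd i (psmult c p) = psmult c (pd i p)"
  by (rule poly_mapping_eqI) (simp add: lookup_pd lookup_psmult)

lemma pd_zero [simp]: "pd i 0 = 0"
  by (rule poly_mapping_eqI) (simp add: lookup_pd)

lemma pd_sum: "pd i (sum g A) = (\<Sum>a\<in>A. pd i (g a))"
  by (induction A rule: infinite_finite_induct) (simp_all add: pd_add)

lemma pd_single: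
  "pd i (Poly_Mapping.single a c) =
     Poly_Mapping.single (a - mono_var i) (of_nat (Poly_Mapping.lookup a i) * c)"
proof (rule poly_mapping_eqI)
  fix b
  show "Poly_Mapping.lookup (pd i (Poly_Mapping.single a c)) b =
    Poly_Mapping.lookup (Poly_Mapping.single (a - mono_var i) (of_nat (Poly_Mapping.lookup a i) * c)) b"
  proof (cases "a = b + mono_var i")
    case False
    then have "Poly_Mapping.lookup a i = 0 \<or> a - mono_var i \<noteq> b"
      using diff_mono_var_add by metis
    with False show ?thesis by (auto simp: lookup_pd lookup_single)
  qed (simp add: lookup_pd add_mono_var_diff lookup_add lookup_mono_var)
qed

lemma pd_mult_single:
  fixes c e :: "'k::field"
  shows "pd i (Poly_Mapping.single a c * Poly_Mapping.single b e) =
    pd i (Poly_Mapping.single a c) * Poly_Mapping.single b e + Poly_Mapping.single a c * pd i (Poly_Mapping.single b e)"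
proof -
  have shift: "Poly_Mapping.single (x - mono_var i + y) (of_nat (Poly_Mapping.lookup x i) * t) =
      Poly_Mapping.single (x + y - mono_var i) (of_nat (Poly_Mapping.lookup x i) * t)" for x y and t :: 'k
  proof (cases "Poly_Mapping.lookup x i = 0")
    case False
    then have "x - mono_var i + y = x + y - mono_var i"
      by (intro poly_mapping_eqI) (auto simp: lookup_add lookup_minus_nat lookup_mono_var)
    then show ?thesis by simp
  qed simp
  show ?thesis
    using shift[of a b "c * e"] shift[of b a "c * e"]
    by (simp add: mult_single pd_single lookup_add algebra_simps single_add)
qed

lemma pd_mult: "pd i (p * q) = pd i p * q + p * pd i (q :: ('n, 'k::field) mpoly)"
proof -
  let ?P = "\<lambda>a. Poly_Mapping.single a (Poly_Mapping.lookup p a)"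
  let ?Q = "\<lambda>b. Poly_Mapping.single b (Poly_Mapping.lookup q b)"
  have "pd i ((\<Sum>a\<in>Poly_Mapping.keys p. ?P a) * (\<Sum>b\<in>Poly_Mapping.keys q. ?Q b)) =
      pd i (\<Sum>a\<in>Poly_Mapping.keys p. ?P a) * (\<Sum>b\<in>Poly_Mapping.keys q. ?Q b) +
      (\<Sum>a\<in>Poly_Mapping.keys p. ?P a) * pd i (\<Sum>b\<in>Poly_Mapping.keys q. ?Q b)"
    by (simp add: sum_distrib_left sum_distrib_right pd_sum pd_mult_single sum.distrib)
  then show ?thesis by (simp flip: poly_mapping_sum_single)
qed

lemma pd_commute: "pd i (pd j p) = pd j (pd i p)"
proof (rule poly_mapping_eqI)
  fix b
  have "b + mono_var i + mono_var j = b + mono_var j + mono_var i" by (simp add: add_ac)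
  then show "Poly_Mapping.lookup (pd i (pd j p)) b = Poly_Mapping.lookup (pd j (pd i p)) b"
    by (cases "i = j") (simp_all add: lookup_pd lookup_add lookup_mono_var algebra_simps)
qed


section \<open>Homogeneous forms and Euler's identity\<close>

lemma mono_deg_eq_sum: "mono_deg (a :: ('n::finite) \<Rightarrow>\<^sub>0 nat) = (\<Sum>i\<in>UNIV. Poly_Mapping.lookup a i)"
  unfolding mono_deg_def by (rule sum.mono_neutral_left) (auto simp: in_keys_iff)

lemma mono_deg_add: "mono_deg (a + b :: ('n::finite) \<Rightarrow>\<^sub>0 nat) = mono_deg a + mono_deg b"
  by (simp add: mono_deg_eq_sum lookup_add sum.distrib)

lemma mono_deg_mono_var: "mono_deg (mono_var i :: ('n::finite) \<Rightarrow>\<^sub>0 nat) = 1"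
  by (simp add: mono_deg_eq_sum lookup_mono_var)

lemma mono_deg_eq_0_iff: "mono_deg (a :: ('n::finite) \<Rightarrow>\<^sub>0 nat) = 0 \<longleftrightarrow> a = 0"
  by (auto simp: mono_deg_eq_sum poly_mapping_eq_iff fun_eq_iff)

lemma mono_deg_eq_1_imp: "mono_deg (a :: ('n::finite) \<Rightarrow>\<^sub>0 nat) = 1 \<Longrightarrow> \<exists>i. a = mono_var i"
proof -
  assume deg: "mono_deg a = 1"
  then have "a \<noteq> 0" by (metis mono_deg_eq_0_iff zero_neq_one)
  then obtain i where i: "Poly_Mapping.lookup a i \<noteq> 0" by (auto simp: poly_mapping_eq_iff fun_eq_iff)
  have "mono_deg (a - mono_var i) + 1 = 1"
    using deg mono_deg_add[of "a - mono_var i" "mono_var i"] diff_mono_var_add[OF i]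
    by (simp add: mono_deg_mono_var)
  then have "a - mono_var i = 0" by (simp add: mono_deg_eq_0_iff)
  then show ?thesis using diff_mono_var_add[OF i] by (metis add_0)
qed

lemma Sdeg_subspace: "psubspace (Sdeg m :: ('n, 'k::field) mpoly set)"
proof (rule pvec.subspaceI)
  fix x y :: "('n, 'k) mpoly" and c :: 'k
  assume "x \<in> Sdeg m"
  moreover have "Poly_Mapping.keys (psmult c x) \<subseteq> Poly_Mapping.keys x"
    by (auto simp: in_keys_iff lookup_psmult)
  ultimately show "psmult c x \<in> Sdeg m" unfolding Sdeg_def by blast
  assume "y \<in> Sdeg m"
  with \<open>x \<in> Sdeg m\<close> show "x + y \<in> Sdeg m" unfolding Sdeg_def using keys_add[of x y] by blast
qed (simp add: Sdeg_def)

lemma Sdeg_mult: "p \<in> Sdeg a \<Longrightarrow> q \<in> Sdeg b \<Longrightarrow> p * q \<in> Sdeg (a + b)"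
  for p q :: "('n::finite, 'k::field) mpoly"
  unfolding Sdeg_def using keys_mult[of p q] by (auto simp: mono_deg_add)

lemma pd_Sdeg: "p \<in> Sdeg m \<Longrightarrow> pd i p \<in> Sdeg (m - 1)"
  for p :: "('n::finite, 'k::field) mpoly"
proof (unfold Sdeg_def, intro CollectI ballI)
  fix b assume p: "p \<in> {p. \<forall>a\<in>Poly_Mapping.keys p. mono_deg a = m}"
    and "b \<in> Poly_Mapping.keys (pd i p)"
  then have "b + mono_var i \<in> Poly_Mapping.keys p" by (auto simp: in_keys_iff lookup_pd)
  then show "mono_deg b = m - 1" using p by (auto simp: mono_deg_add mono_deg_mono_var)
qed

lemma mvar_Sdeg: "(mvar i :: ('n::finite, 'k::field) mpoly) \<in> Sdeg 1"
  by (simp add: Sdeg_def mvar_def mono_deg_mono_var)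

lemma const_Sdeg: "(Poly_Mapping.single 0 c :: ('n::finite, 'k::field) mpoly) \<in> Sdeg 0"
  by (simp add: Sdeg_def mono_deg_eq_0_iff)

lemma Sdeg_0_eq_const: "p \<in> Sdeg 0 \<Longrightarrow> p = Poly_Mapping.single 0 (Poly_Mapping.lookup p 0)"
  for p :: "('n::finite, 'k::field) mpoly"
  unfolding Sdeg_def
  by (rule poly_mapping_eqI) (auto simp: lookup_single when_def in_keys_iff mono_deg_eq_0_iff)

lemma lin_coeff_add: "lin_coeff (p + q) i = lin_coeff p i + lin_coeff q i"
  by (simp add: lin_coeff_def lookup_add)

lemma lin_coeff_psmult: "lin_coeff (psmult c p) i = c * lin_coeff p i"
  by (simp add: lin_coeff_def lookup_psmult)

lemma lin_coeff_sum: "lin_coeff (sum g A) i = (\<Sum>a\<in>A. lin_coeff (g a) i)"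
  by (simp add: lin_coeff_def lookup_sum)

lemma lin_coeff_zero [simp]: "lin_coeff 0 i = 0"
  by (simp add: lin_coeff_def)

lemma lin_coeff_mvar: "lin_coeff (mvar j) i = (if i = j then 1 else 0)"
  using mono_var_eq_iff[of j i] by (simp add: lin_coeff_def mvar_def lookup_single when_def)

lemma mvar_inj: "inj (mvar :: 'n \<Rightarrow> ('n, 'k::field) mpoly)"
  by (rule injI) (metis lin_coeff_mvar one_neq_zero)

lemma lin_form_expansion: "m \<in> Sdeg 1 \<Longrightarrow> m = (\<Sum>i\<in>UNIV. psmult (lin_coeff m i) (mvar i))"
  for m :: "('n::finite, 'k::field) mpoly"
proof (rule poly_mapping_eqI)
  fix b assume m: "m \<in> Sdeg 1"
  show "Poly_Mapping.lookup m b = Poly_Mapping.lookup (\<Sum>i\<in>UNIV. psmult (lin_coeff m i) (mvar i)) b"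
  proof (cases "\<exists>j. b = mono_var j")
    case True
    then obtain j where j: "b = mono_var j" by blast
    have "(\<Sum>i\<in>UNIV. lin_coeff m i * Poly_Mapping.lookup (mvar i) b) =
        (\<Sum>i\<in>UNIV. if i = j then lin_coeff m j else 0)"
      by (rule sum.cong) (auto simp: mvar_def lookup_single j mono_var_eq_iff)
    then show ?thesis by (simp add: lookup_sum lookup_psmult j lin_coeff_def)
  next
    case False
    then have "b \<notin> Poly_Mapping.keys m" using m mono_deg_eq_1_imp unfolding Sdeg_def by blast
    moreover have "(\<Sum>i\<in>UNIV. lin_coeff m i * Poly_Mapping.lookup (mvar i) b) = 0"
      by (rule sum.neutral) (use False in \<open>auto simp: mvar_def lookup_single\<close>)
    ultimately show ?thesis by (simp add: lookup_sum lookup_psmult in_keys_iff)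
  qed
qed

lemma lookup_mvar_mult:
  "Poly_Mapping.lookup (mvar i * q) b =
     (if Poly_Mapping.lookup b i \<noteq> 0 then Poly_Mapping.lookup q (b - mono_var i) else 0)"
  for q :: "('n, 'k::field) mpoly"
proof -
  have "mvar i * q = (\<Sum>a\<in>Poly_Mapping.keys q. Poly_Mapping.single (mono_var i + a) (Poly_Mapping.lookup q a))"
    by (subst poly_mapping_sum_single[of q]) (simp add: sum_distrib_left mvar_def mult_single)
  then show ?thesis
    by (auto simp: lookup_sum lookup_single when_def mono_var_add_eq_iff sum.delta in_keys_iff)
qed

theorem euler_identity: "p \<in> Sdeg m \<Longrightarrow> (\<Sum>i\<in>UNIV. mvar i * pd i p) = psmult (of_nat m) p"
  for p :: "('n::finite, 'k::field) mpoly"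
proof (rule poly_mapping_eqI)
  fix b assume p: "p \<in> Sdeg m"
  have summand: "Poly_Mapping.lookup (mvar i * pd i p) b =
      of_nat (Poly_Mapping.lookup b i) * Poly_Mapping.lookup p b" for i
  proof (cases "Poly_Mapping.lookup b i = 0")
    case False
    then have "Poly_Mapping.lookup (b - mono_var i) i + 1 = Poly_Mapping.lookup b i"
      by (simp add: lookup_minus_nat lookup_mono_var)
    with False show ?thesis by (simp add: lookup_mvar_mult lookup_pd diff_mono_var_add)
  qed (simp add: lookup_mvar_mult)
  have "Poly_Mapping.lookup (\<Sum>i\<in>UNIV. mvar i * pd i p) b = of_nat (mono_deg b) * Poly_Mapping.lookup p b"
    by (simp add: lookup_sum summand mono_deg_eq_sum sum_distrib_right)
  also have "\<dots> = of_nat m * Poly_Mapping.lookup p b"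
    using p unfolding Sdeg_def by (cases "b \<in> Poly_Mapping.keys p") (auto simp: in_keys_iff)
  finally show "Poly_Mapping.lookup (\<Sum>i\<in>UNIV. mvar i * pd i p) b = Poly_Mapping.lookup (psmult (of_nat m) p) b"
    by (simp add: lookup_psmult)
qed

lemma Sdeg_eq_0_if_pd_eq_0:
  "p \<in> Sdeg m \<Longrightarrow> (of_nat m :: 'k) \<noteq> 0 \<Longrightarrow> (\<And>i. pd i p = 0) \<Longrightarrow> p = 0"
  for p :: "('n::finite, 'k::field) mpoly"
  using euler_identity[of p m] by simp

lemma pd_lin_form: "m \<in> Sdeg 1 \<Longrightarrow> pd i m = Poly_Mapping.single 0 (lin_coeff m i)"
  for m :: "('n::finite, 'k::field) mpoly"
  using Sdeg_0_eq_const[of "pd i m"] pd_Sdeg[of m 1 i] by (simp add: lookup_pd lin_coeff_def)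


abbreviation plinear :: "(('n, 'k::field) mpoly \<Rightarrow> ('n, 'k) mpoly) \<Rightarrow> bool" where
  "plinear f \<equiv> module_hom psmult psmult f"

lemma plinearI:
  "(\<And>x y. f (x + y) = f x + f y) \<Longrightarrow> (\<And>c x. f (psmult c x) = psmult c (f x)) \<Longrightarrow> plinear f"
  by (simp add: module_hom_iff pvec.module_axioms)

lemma plinear_span_into:
  assumes "plinear f" "\<And>s. s \<in> S \<Longrightarrow> f s \<in> T" "psubspace T" "x \<in> pspan S"
  shows "f x \<in> T"
proof -
  have "pspan (f ` S) \<subseteq> T" using assms(2,3) by (intro pvec.span_minimal) auto
  then show ?thesis using module_hom.span_image[OF assms(1)] assms(4) by blast
qed

lemma plinear_mult_left: "plinear (\<lambda>g. u * g)"
  by (rule plinearI) (simp_all add: psmult_mult_right distrib_left)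

lemma plinear_mult_right: "plinear (\<lambda>g. g * u)"
  by (rule plinearI) (simp_all add: psmult_mult_left distrib_right)

definition dderiv :: "('n::finite \<Rightarrow> 'k) \<Rightarrow> ('n, 'k::field) mpoly \<Rightarrow> ('n, 'k) mpoly" where
  "dderiv c p = (\<Sum>i\<in>UNIV. psmult (c i) (pd i p))"

definition lin_eval :: "('n::finite \<Rightarrow> 'k) \<Rightarrow> ('n, 'k::field) mpoly \<Rightarrow> 'k" where
  "lin_eval c m = (\<Sum>i\<in>UNIV. c i * lin_coeff m i)"

lemma dderiv_zero [simp]: "dderiv c 0 = 0"
  by (simp add: dderiv_def)

lemma dderiv_add: "dderiv c (p + q) = dderiv c p + dderiv c q"
  by (simp add: dderiv_def pd_add pvec.scale_right_distrib sum.distrib)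

lemma dderiv_psmult: "dderiv c (psmult a p) = psmult a (dderiv c p)"
  by (simp add: dderiv_def pd_psmult psmult_sum mult.commute)

lemma plinear_dderiv: "plinear (dderiv c)"
  by (rule plinearI) (simp_all add: dderiv_add dderiv_psmult)

lemma dderiv_diff: "dderiv c (p - q) = dderiv c p - dderiv c q"
  using dderiv_add[of c "p - q" q] by (simp add: algebra_simps)

lemma dderiv_mult: "dderiv c (p * q) = dderiv c p * q + p * dderiv c q"
  by (simp add: dderiv_def pd_mult pvec.scale_right_distrib sum.distrib sum_distrib_left
      sum_distrib_right psmult_mult_left psmult_mult_right)

lemma dderiv_one: "dderiv c 1 = 0"
  by (simp add: dderiv_def pd_single flip: single_one)

lemma dderiv_commute: "dderiv c (dderiv e p) = dderiv e (dderiv c p)"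
proof -
  have "dderiv c (dderiv e p) = (\<Sum>i\<in>UNIV. \<Sum>j\<in>UNIV. psmult (c i * e j) (pd i (pd j p)))"
    by (simp add: dderiv_def pd_sum pd_psmult psmult_sum)
  also have "\<dots> = (\<Sum>j\<in>UNIV. \<Sum>i\<in>UNIV. psmult (c i * e j) (pd j (pd i p)))"
    by (subst sum.swap) (simp add: pd_commute)
  also have "\<dots> = dderiv e (dderiv c p)"
    by (simp add: dderiv_def pd_sum pd_psmult psmult_sum mult.commute)
  finally show ?thesis .
qed

lemma dderiv_Sdeg: "p \<in> Sdeg m \<Longrightarrow> dderiv c p \<in> Sdeg (m - 1)"
  unfolding dderiv_def
  by (rule pvec.subspace_sum[OF Sdeg_subspace]) (rule pvec.subspace_scale[OF Sdeg_subspace pd_Sdeg])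

lemma dderiv_lin_form: "m \<in> Sdeg 1 \<Longrightarrow> dderiv c m = Poly_Mapping.single 0 (lin_eval c m)"
  by (simp add: dderiv_def lin_eval_def pd_lin_form psmult_conv_mult mult_single flip: single_sum)

lemma dderiv_unit: "dderiv (\<lambda>j. if j = i then 1 else 0) p = pd i p"
  unfolding dderiv_def by (simp add: if_distrib if_distribR cong: if_cong)

lemma dderiv_add_dir: "dderiv (\<lambda>j. c j + e j) p = dderiv c p + dderiv e p"
  by (simp add: dderiv_def pvec.scale_left_distrib sum.distrib)

lemma dderiv_scale_dir: "dderiv (\<lambda>j. a * e j) p = psmult a (dderiv e p)"
  by (simp add: dderiv_def psmult_sum flip: pvec.scale_scale)

lemma dderiv_in_grad_span: "dderiv c f \<in> grad_span f"
  unfolding dderiv_def grad_span_def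
  by (intro pvec.span_sum pvec.span_scale pvec.span_base) auto

lemma lin_eval_zero [simp]: "lin_eval v 0 = 0"
  by (simp add: lin_eval_def)

lemma lin_eval_add: "lin_eval v (p + q) = lin_eval v p + lin_eval v q"
  by (simp add: lin_eval_def lin_coeff_add distrib_left sum.distrib)

lemma lin_eval_psmult: "lin_eval v (psmult t p) = t * lin_eval v p"
  by (simp add: lin_eval_def lin_coeff_psmult sum_distrib_left algebra_simps)

lemma lin_eval_diff: "lin_eval v (p - q) = lin_eval v p - lin_eval v q"
  using lin_eval_add[of v "p - q" q] by simp

lemma lin_eval_mvar: "lin_eval v (mvar j) = v j"
  unfolding lin_eval_def by (simp add: lin_coeff_mvar if_distrib cong: if_cong)

lemma lin_eval_add_dir: "lin_eval (\<lambda>j. c j + e j) u = lin_eval c u + lin_eval e u"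
  by (simp add: lin_eval_def distrib_right sum.distrib)

lemma lin_eval_scale_dir: "lin_eval (\<lambda>j. a * e j) u = a * lin_eval e u"
  by (simp add: lin_eval_def sum_distrib_left mult.assoc)


section \<open>Symmetric powers of a space of linear forms\<close>

lemma symp_subspace: "psubspace (symp U m)"
  unfolding symp_def by (rule pvec.subspace_span)

lemma prod_list_in_symp: "length ls = m \<Longrightarrow> set ls \<subseteq> U \<Longrightarrow> prod_list ls \<in> symp U m"
  unfolding symp_def by (rule pvec.span_base) blast

lemma plinear_symp_into:
  assumes "g \<in> symp U m" "plinear f" "psubspace T"
    and "\<And>ls. length ls = m \<Longrightarrow> set ls \<subseteq> U \<Longrightarrow> f (prod_list ls) \<in> T"
  shows "f g \<in> T"
  using plinear_span_into[OF assms(2) _ assms(3) assms(1)[unfolded symp_def]] assms(4) by blast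

lemma symp_mult: "g \<in> symp U a \<Longrightarrow> h \<in> symp U b \<Longrightarrow> g * h \<in> symp U (a + b)"
proof -
  assume g: "g \<in> symp U a" and h: "h \<in> symp U b"
  have "prod_list ls * h \<in> symp U (a + b)" if "length ls = a" "set ls \<subseteq> U" for ls
    using plinear_symp_into[OF h plinear_mult_left symp_subspace, of "prod_list ls"]
      prod_list_in_symp[of "ls @ _" "a + b" U] that by simp
  then show ?thesis
    using plinear_symp_into[OF g plinear_mult_right symp_subspace, of h] by simp
qed

lemma lin_mult_symp: "u \<in> U \<Longrightarrow> g \<in> symp U m \<Longrightarrow> u * g \<in> symp U (Suc m)"
  using symp_mult[of u U 1 g m] prod_list_in_symp[of "[u]" 1 U] by simp

lemma prod_list_Sdeg: "set ls \<subseteq> Sdeg 1 \<Longrightarrow> prod_list ls \<in> Sdeg (length ls)"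
  for ls :: "('n::finite, 'k::field) mpoly list"
  by (induction ls) (use const_Sdeg[of 1] Sdeg_mult in \<open>fastforce+\<close>)

lemma symp_Sdeg: "U \<subseteq> Sdeg 1 \<Longrightarrow> symp U m \<subseteq> Sdeg m"
  for U :: "('n::finite, 'k::field) mpoly set"
  unfolding symp_def by (rule pvec.span_minimal[OF _ Sdeg_subspace]) (use prod_list_Sdeg in force)

lemma symp_zero_space: "symp {0} (Suc m) = {0}"
proof -
  have "symp {0::('a, 'b::field) mpoly} (Suc m) \<subseteq> {0}"
    unfolding symp_def
    by (rule pvec.span_minimal[OF _ pvec.subspace_single_0]) (auto simp: length_Suc_conv)
  then show ?thesis using symp_subspace pvec.subspace_0 by blast
qed

lemma dderiv_symp_eq_0: "(\<And>u. u \<in> U \<Longrightarrow> dderiv c u = 0) \<Longrightarrow> g \<in> symp U m \<Longrightarrow> dderiv c g = 0"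
proof -
  assume U: "\<And>u. u \<in> U \<Longrightarrow> dderiv c u = 0" and g: "g \<in> symp U m"
  have "set ls \<subseteq> U \<Longrightarrow> dderiv c (prod_list ls) = 0" for ls
    by (induction ls) (auto simp: dderiv_one dderiv_mult U)
  then show ?thesis
    using plinear_symp_into[OF g plinear_dderiv pvec.subspace_single_0, of c] by auto
qed

lemma dderiv_prod_list_symp:
  "U \<subseteq> Sdeg 1 \<Longrightarrow> set ls \<subseteq> U \<Longrightarrow> length ls = Suc m \<Longrightarrow> dderiv c (prod_list ls) \<in> symp U m"
proof (induction ls arbitrary: m)
  case (Cons u ls)
  have u: "u \<in> Sdeg 1" "u \<in> U" using Cons.prems by auto
  have "dderiv c u * prod_list ls \<in> symp U m"
    using pvec.subspace_scale[OF symp_subspace prod_list_in_symp[of ls m U]] Cons.prems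
    by (simp add: dderiv_lin_form[OF u(1)] flip: psmult_conv_mult)
  moreover have "u * dderiv c (prod_list ls) \<in> symp U m"
  proof (cases ls)
    case Nil
    then show ?thesis by (simp add: dderiv_one pvec.subspace_0[OF symp_subspace])
  next
    case (Cons v vs)
    then obtain m' where "m = Suc m'" using \<open>length (u # ls) = Suc m\<close> by auto
    then show ?thesis using Cons.IH[of m'] Cons.prems lin_mult_symp[OF u(2)] by simp
  qed
  ultimately show ?case by (simp add: dderiv_mult pvec.subspace_add[OF symp_subspace])
qed simp

lemma dderiv_symp: "U \<subseteq> Sdeg 1 \<Longrightarrow> g \<in> symp U (Suc m) \<Longrightarrow> dderiv c g \<in> symp U m"
  using plinear_symp_into[OF _ plinear_dderiv symp_subspace] dderiv_prod_list_symp by blast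


section \<open>Decompositions \<open>V = U \<oplus> W\<close>\<close>

definition dproj :: "('n, 'k::field) mpoly set \<Rightarrow> ('n, 'k) mpoly set \<Rightarrow> ('n, 'k) mpoly \<Rightarrow> ('n, 'k) mpoly" where
  "dproj A B m = (THE u. u \<in> A \<and> m - u \<in> B)"

text \<open>The coefficients of \<open>x\<^sub>i\<close> in the projections of the variables: the derivative in direction
  \<open>dual_proj U W i\<close> annihilates \<open>W\<close>, and these directions for \<open>(U, W)\<close> and \<open>(W, U)\<close> add up
  to the \<open>i\<close>-th unit vector.\<close>

definition dual_proj :: "('n::finite, 'k::field) mpoly set \<Rightarrow> ('n, 'k) mpoly set \<Rightarrow> 'n \<Rightarrow> 'n \<Rightarrow> 'k" where
  "dual_proj A B i j = lin_coeff (dproj A B (mvar j)) i"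

lemma setsum_commute: "setsum A B = setsum B A"
  unfolding setsum_def by (blast intro: add.commute)

lemma vdecomp_sym: "vdecomp U W \<Longrightarrow> vdecomp W U"
  unfolding vdecomp_def using setsum_commute[of U W] by (simp add: Int_commute)

locale linear_decomp =
  fixes U W :: "('n::finite, 'k::field) mpoly set"
  assumes vdecomp: "vdecomp U W"
begin

lemma U_subspace: "psubspace U" and W_subspace: "psubspace W"
  and U_Sdeg: "U \<subseteq> Sdeg 1" and W_Sdeg: "W \<subseteq> Sdeg 1"
  and U_inter_W: "U \<inter> W = {0}" and setsum_U_W: "setsum U W = Sdeg 1"
  using vdecomp unfolding vdecomp_def by auto

lemma swap: "linear_decomp W U"
  using vdecomp vdecomp_sym by unfold_locales blast

lemma decomp_unique:
  assumes "u \<in> U" "w \<in> W" "u' \<in> U" "w' \<in> W" "u + w = u' + w'"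
  shows "u = u'"
proof -
  have "u - u' \<in> U" using assms(1,3) by (rule pvec.subspace_diff[OF U_subspace])
  moreover have "u - u' = w' - w" using assms(5) by (simp add: algebra_simps)
  then have "u - u' \<in> W" using pvec.subspace_diff[OF W_subspace assms(4,2)] by simp
  ultimately have "u - u' \<in> U \<inter> W" by blast
  then show "u = u'" using U_inter_W by simp
qed

lemma dproj_eq: "u \<in> U \<Longrightarrow> w \<in> W \<Longrightarrow> dproj U W (u + w) = u"
  unfolding dproj_def
proof (rule the_equality)
  fix u' assume "u \<in> U" "w \<in> W" "u' \<in> U \<and> u + w - u' \<in> W"
  then show "u' = u" using decomp_unique[of u' "u + w - u'" u w] by simp
qed simp

lemma dproj_mem:
  assumes "m \<in> Sdeg 1"
  shows "dproj U W m \<in> U" "m - dproj U W m \<in> W"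
proof -
  obtain u w where "u \<in> U" "w \<in> W" "m = u + w" using assms setsum_U_W unfolding setsum_def by blast
  then show "dproj U W m \<in> U" "m - dproj U W m \<in> W" by (simp_all add: dproj_eq)
qed

lemma dproj_U: "u \<in> U \<Longrightarrow> dproj U W u = u"
  using dproj_eq[of u 0] pvec.subspace_0[OF W_subspace] by simp

lemma dproj_W: "w \<in> W \<Longrightarrow> dproj U W w = 0"
  using dproj_eq[of 0 w] pvec.subspace_0[OF U_subspace] by simp

lemma dproj_swap: "m \<in> Sdeg 1 \<Longrightarrow> dproj W U m = m - dproj U W m"
proof -
  assume m: "m \<in> Sdeg 1"
  have "m = (m - dproj U W m) + dproj U W m" by simp
  then show ?thesis
    using linear_decomp.dproj_eq[OF swap, of "m - dproj U W m" "dproj U W m"] dproj_mem[OF m] by metis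
qed

lemma dproj_add: "a \<in> Sdeg 1 \<Longrightarrow> b \<in> Sdeg 1 \<Longrightarrow> dproj U W (a + b) = dproj U W a + dproj U W b"
proof -
  assume a: "a \<in> Sdeg 1" and b: "b \<in> Sdeg 1"
  have "a + b = (dproj U W a + dproj U W b) + ((a - dproj U W a) + (b - dproj U W b))" by simp
  moreover have "dproj U W a + dproj U W b \<in> U"
    using dproj_mem(1)[OF a] dproj_mem(1)[OF b] by (rule pvec.subspace_add[OF U_subspace])
  moreover have "(a - dproj U W a) + (b - dproj U W b) \<in> W"
    using dproj_mem(2)[OF a] dproj_mem(2)[OF b] by (rule pvec.subspace_add[OF W_subspace])
  ultimately show ?thesis using dproj_eq by metis
qed

lemma dproj_psmult: "a \<in> Sdeg 1 \<Longrightarrow> dproj U W (psmult c a) = psmult c (dproj U W a)"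
proof -
  assume a: "a \<in> Sdeg 1"
  have "psmult c a = psmult c (dproj U W a) + psmult c (a - dproj U W a)"
    by (simp flip: pvec.scale_right_distrib)
  moreover have "psmult c (dproj U W a) \<in> U" using pvec.subspace_scale[OF U_subspace dproj_mem(1)[OF a]] .
  moreover have "psmult c (a - dproj U W a) \<in> W" using pvec.subspace_scale[OF W_subspace dproj_mem(2)[OF a]] .
  ultimately show ?thesis using dproj_eq by metis
qed

lemma dproj_lincomb:
  "finite I \<Longrightarrow> (\<And>i. i \<in> I \<Longrightarrow> m i \<in> Sdeg 1) \<Longrightarrow>
    dproj U W (\<Sum>i\<in>I. psmult (c i) (m i)) = (\<Sum>i\<in>I. psmult (c i) (dproj U W (m i)))"
proof (induction I rule: finite_induct)
  case empty
  then show ?case using dproj_U pvec.subspace_0[OF U_subspace] by simp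
next
  case (insert x F)
  have "(\<Sum>i\<in>F. psmult (c i) (m i)) \<in> Sdeg 1" "psmult (c x) (m x) \<in> Sdeg 1"
    using insert.prems by (auto intro!: pvec.subspace_sum[OF Sdeg_subspace] pvec.subspace_scale[OF Sdeg_subspace])
  then show ?case using insert by (simp add: dproj_add dproj_psmult)
qed

lemma dproj_expansion:
  "m \<in> Sdeg 1 \<Longrightarrow> dproj U W m = (\<Sum>j\<in>UNIV. psmult (lin_coeff m j) (dproj U W (mvar j)))"
proof -
  assume m: "m \<in> Sdeg 1"
  have "dproj U W m = dproj U W (\<Sum>i\<in>UNIV. psmult (lin_coeff m i) (mvar i))"
    using lin_form_expansion[OF m] by simp
  also have "\<dots> = (\<Sum>j\<in>UNIV. psmult (lin_coeff m j) (dproj U W (mvar j)))"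
    using dproj_lincomb[OF finite_UNIV, of mvar "lin_coeff m"] mvar_Sdeg by blast
  finally show ?thesis .
qed

lemma lin_eval_dual_proj: "m \<in> Sdeg 1 \<Longrightarrow> lin_eval (dual_proj U W i) m = lin_coeff (dproj U W m) i"
  by (simp add: dproj_expansion lin_eval_def dual_proj_def lin_coeff_sum lin_coeff_psmult mult.commute)

lemma dderiv_dual_proj_W: "w \<in> W \<Longrightarrow> dderiv (dual_proj U W i) w = 0"
  using W_Sdeg dderiv_lin_form[of w] lin_eval_dual_proj[of w] dproj_W[of w] by auto

lemma dderiv_dual_proj_symp_W: "g \<in> symp W m \<Longrightarrow> dderiv (dual_proj U W i) g = 0"
  using dderiv_symp_eq_0 dderiv_dual_proj_W by blast

lemma pd_split: "pd i p = dderiv (dual_proj U W i) p + dderiv (dual_proj W U i) p"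
proof -
  have "(\<lambda>j. dual_proj U W i j + dual_proj W U i j) = (\<lambda>j. if j = i then 1 else 0)"
    by (auto simp: dual_proj_def dproj_swap[OF mvar_Sdeg] lin_coeff_mvar simp flip: lin_coeff_add)
  then show ?thesis using dderiv_add_dir[of "dual_proj U W i" "dual_proj W U i" p] dderiv_unit[of i p] by simp
qed

lemma mixed_terms_zero: "(\<Sum>i\<in>UNIV. dproj U W (mvar i) * dderiv (dual_proj W U i) g) = 0"
proof -
  have proj_comp: "(\<Sum>i\<in>UNIV. psmult (dual_proj W U i j) (dproj U W (mvar i))) = 0" for j
  proof -
    have W_part: "dproj W U (mvar j) \<in> W" using linear_decomp.dproj_mem(1)[OF swap mvar_Sdeg] .
    then have "dproj U W (dproj W U (mvar j)) =
        (\<Sum>i\<in>UNIV. psmult (dual_proj W U i j) (dproj U W (mvar i)))"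
      using dproj_expansion W_Sdeg by (auto simp: dual_proj_def)
    then show ?thesis using dproj_W[OF W_part] by simp
  qed
  have "(\<Sum>i\<in>UNIV. dproj U W (mvar i) * dderiv (dual_proj W U i) g) =
      (\<Sum>j\<in>UNIV. (\<Sum>i\<in>UNIV. psmult (dual_proj W U i j) (dproj U W (mvar i))) * pd j g)"
    by (simp add: dderiv_def sum_distrib_left sum_distrib_right psmult_mult_left psmult_mult_right)
      (rule sum.swap)
  then show ?thesis by (simp add: proj_comp)
qed

text \<open>Euler's identity with \<open>x\<^sub>i\<close> and \<open>\<partial>\<^sub>i\<close> split along \<open>U \<oplus> W\<close>; the mixed terms cancel.\<close>

lemma euler_split:
  assumes "g \<in> Sdeg m"
  shows "psmult (of_nat m) g =
    (\<Sum>i\<in>UNIV. dproj U W (mvar i) * dderiv (dual_proj U W i) g) +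
    (\<Sum>i\<in>UNIV. dproj W U (mvar i) * dderiv (dual_proj W U i) g)"
proof -
  let ?xU = "\<lambda>i. dproj U W (mvar i)" and ?xW = "\<lambda>i. dproj W U (mvar i)"
  let ?dU = "\<lambda>i. dderiv (dual_proj U W i) g" and ?dW = "\<lambda>i. dderiv (dual_proj W U i) g"
  have "mvar i * pd i g = ?xU i * ?dU i + ?xU i * ?dW i + ?xW i * ?dW i + ?xW i * ?dU i" for i
  proof -
    have "mvar i * pd i g = (?xU i + ?xW i) * (?dU i + ?dW i)"
      using dproj_swap[OF mvar_Sdeg, of i] pd_split[of i g] by simp
    then show ?thesis by (simp only: distrib_left distrib_right ac_simps)
  qed
  then have "psmult (of_nat m) g =
      (\<Sum>i\<in>UNIV. ?xU i * ?dU i) + (\<Sum>i\<in>UNIV. ?xU i * ?dW i) + (\<Sum>i\<in>UNIV. ?xW i * ?dW i) + (\<Sum>i\<in>UNIV. ?xW i * ?dU i)"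
    by (simp only: euler_identity[OF assms, symmetric] sum.distrib)
  then show ?thesis
    using mixed_terms_zero[of g] linear_decomp.mixed_terms_zero[OF swap, of g] by simp
qed

lemma symp_inter_eq_0:
  assumes "(of_nat m :: 'k) \<noteq> 0" "g \<in> symp U m" "g \<in> symp W m"
  shows "g = 0"
proof (rule Sdeg_eq_0_if_pd_eq_0)
  show "g \<in> Sdeg m" using symp_Sdeg[OF U_Sdeg] assms(2) by blast
  show "pd i g = 0" for i
    using pd_split[of i g] dderiv_dual_proj_symp_W[OF assms(3)]
      linear_decomp.dderiv_dual_proj_symp_W[OF swap assms(2)] by simp
qed (use assms in simp)

end


section \<open>Dimension counts\<close>

abbreviation pfinite :: "('n, 'k::field) mpoly set \<Rightarrow> bool" where
  "pfinite A \<equiv> \<exists>F. finite F \<and> A \<subseteq> pspan F"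

lemma pfinite_basis:
  assumes "pfinite A"
  obtains B where "B \<subseteq> A" "pvec.independent B" "A \<subseteq> pspan B" "card B = pdim A" "finite B"
proof -
  obtain F where F: "finite F" "A \<subseteq> pspan F" using assms by blast
  obtain B where B: "B \<subseteq> A" "pvec.independent B" "A \<subseteq> pspan B" "card B = pdim A"
    using pvec.basis_exists by blast
  have "finite B" using pvec.independent_span_bound[OF F(1) B(2)] B(1) F(2) by blast
  with B that show ?thesis by blast
qed

lemma pdim_mono: "A \<subseteq> B \<Longrightarrow> pfinite B \<Longrightarrow> pdim A \<le> pdim B"
proof -
  assume "A \<subseteq> B" "pfinite B"
  moreover obtain BB where "pvec.independent BB" "B \<subseteq> pspan BB" "card BB = pdim B" "finite BB"
    using pfinite_basis[OF \<open>pfinite B\<close>] by blast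
  ultimately show ?thesis using pvec.dim_le_card[of A BB] by auto
qed

lemma pdim_eq_0_imp: "psubspace U \<Longrightarrow> pfinite U \<Longrightarrow> pdim U = 0 \<Longrightarrow> U = {0}"
proof -
  assume U: "psubspace U" "pfinite U" "pdim U = 0"
  obtain B where "U \<subseteq> pspan B" "card B = pdim U" "finite B"
    using pfinite_basis[OF U(2)] by blast
  then have "U \<subseteq> {0}" using U(3) by simp
  then show ?thesis using pvec.subspace_0[OF U(1)] by blast
qed

lemma setsum_subspace: "psubspace A \<Longrightarrow> psubspace B \<Longrightarrow> psubspace (setsum A B)"
  unfolding setsum_def by (rule pvec.subspace_sums)

lemma pvec_independent_Un:
  assumes A: "psubspace A" "BA \<subseteq> A" "pvec.independent BA" "finite BA"
    and B: "psubspace B" "BB \<subseteq> B" "pvec.independent BB" "finite BB"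
    and AB: "A \<inter> B = {0}"
  shows "pvec.independent (BA \<union> BB)"
proof (rule pvec.independent_if_scalars_zero)
  have "0 \<notin> BA" using A(3) pvec.dependent_zero by blast
  moreover have "BA \<inter> BB \<subseteq> {0}" using A(2) B(2) AB by blast
  ultimately have disj: "BA \<inter> BB = {}" by auto
  fix g x assume s: "(\<Sum>x\<in>BA \<union> BB. psmult (g x) x) = 0" and x: "x \<in> BA \<union> BB"
  let ?a = "\<Sum>x\<in>BA. psmult (g x) x" and ?b = "\<Sum>x\<in>BB. psmult (g x) x"
  have e: "?a = - ?b"
    using s by (simp add: sum.union_disjoint[OF A(4) B(4) disj] eq_neg_iff_add_eq_0)
  have "?a \<in> A"
    using A(2) by (intro pvec.subspace_sum[OF A(1)] pvec.subspace_scale[OF A(1)]) auto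
  moreover have "?b \<in> B"
    using B(2) by (intro pvec.subspace_sum[OF B(1)] pvec.subspace_scale[OF B(1)]) auto
  then have "- ?b \<in> B" by (rule pvec.subspace_neg[OF B(1)])
  ultimately have "?a \<in> A \<inter> B" using e by simp
  then have zA: "?a = 0" using AB by blast
  then have zB: "?b = 0" using e by simp
  show "g x = 0"
    using x pvec.independentD[OF A(3,4) subset_refl zA] pvec.independentD[OF B(3,4) subset_refl zB]
    by blast
qed (use A(4) B(4) in simp)

lemma pdim_setsum:
  assumes A: "psubspace A" "pfinite A" and B: "psubspace B" "pfinite B" and AB: "A \<inter> B = {0}"
  shows "pdim (setsum A B) = pdim A + pdim B"
proof -
  obtain BA where BA: "BA \<subseteq> A" "pvec.independent BA" "A \<subseteq> pspan BA" "card BA = pdim A" "finite BA"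
    using pfinite_basis[OF A(2)] by blast
  obtain BB where BB: "BB \<subseteq> B" "pvec.independent BB" "B \<subseteq> pspan BB" "card BB = pdim B" "finite BB"
    using pfinite_basis[OF B(2)] by blast
  have "0 \<notin> BA" using BA(2) pvec.dependent_zero by blast
  moreover have "BA \<inter> BB \<subseteq> {0}" using BA(1) BB(1) AB by blast
  ultimately have disj: "BA \<inter> BB = {}" by auto
  have sub: "BA \<union> BB \<subseteq> setsum A B"
  proof
    fix x assume "x \<in> BA \<union> BB"
    then have "x = x + 0 \<and> x \<in> A \<and> 0 \<in> B \<or> x = 0 + x \<and> 0 \<in> A \<and> x \<in> B"
      using BA(1) BB(1) pvec.subspace_0[OF A(1)] pvec.subspace_0[OF B(1)] by auto
    then show "x \<in> setsum A B" unfolding setsum_def by blast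
  qed
  have "pspan BA = A" "pspan BB = B" using BA BB A(1) B(1) pvec.span_subspace by blast+
  then have span: "setsum A B \<subseteq> pspan (BA \<union> BB)"
    unfolding pvec.span_Un setsum_def by blast
  have "pdim (setsum A B) = card (BA \<union> BB)"
    using pvec.dim_unique[OF sub span pvec_independent_Un[OF A(1) BA(1,2,5) B(1) BB(1,2,5) AB] refl] .
  then show ?thesis using card_Un_disjoint[OF BA(5) BB(5) disj] BA BB by simp
qed

lemma Sdeg_1_subset_span_mvar: "(Sdeg 1 :: ('n::finite, 'k::field) mpoly set) \<subseteq> pspan (range mvar)"
proof
  fix m :: "('n, 'k) mpoly" assume "m \<in> Sdeg 1"
  moreover have "(\<Sum>i\<in>UNIV. psmult (lin_coeff m i) (mvar i)) \<in> pspan (range mvar)"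
    by (intro pvec.span_sum pvec.span_scale pvec.span_base) auto
  ultimately show "m \<in> pspan (range mvar)" using lin_form_expansion by metis
qed

lemma pfinite_Sdeg_1: "U \<subseteq> Sdeg 1 \<Longrightarrow> pfinite (U :: ('n::finite, 'k::field) mpoly set)"
  by (intro exI[of _ "range mvar"] conjI) (use Sdeg_1_subset_span_mvar in auto)

lemma pdim_Sdeg_1: "pdim (Sdeg 1 :: ('n::finite, 'k::field) mpoly set) = card (UNIV :: 'n set)"
proof -
  have "pvec.independent (range (mvar :: 'n \<Rightarrow> ('n, 'k) mpoly))"
  proof (rule pvec.independent_if_scalars_zero)
    fix g x assume s: "(\<Sum>x\<in>range (mvar :: 'n \<Rightarrow> ('n, 'k) mpoly). psmult (g x) x) = 0"
      and "x \<in> range (mvar :: 'n \<Rightarrow> ('n, 'k) mpoly)"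
    then obtain j where j: "x = mvar j" by blast
    have "lin_coeff (\<Sum>i\<in>UNIV. psmult (g (mvar i)) (mvar i :: ('n, 'k) mpoly)) j = 0"
      using s by (simp add: sum.reindex[OF mvar_inj])
    then show "g x = 0" by (simp add: lin_coeff_sum lin_coeff_psmult lin_coeff_mvar j if_distrib cong: if_cong)
  qed simp
  then have "pdim (Sdeg 1 :: ('n, 'k) mpoly set) = card (range (mvar :: 'n \<Rightarrow> ('n, 'k) mpoly))"
    using pvec.dim_unique[OF _ Sdeg_1_subset_span_mvar] mvar_Sdeg by blast
  then show ?thesis by (simp add: card_image[OF mvar_inj])
qed

lemma (in linear_decomp) pdim_U_add_pdim_W: "pdim U + pdim W = card (UNIV :: 'n set)"
  using pdim_setsum[OF U_subspace pfinite_Sdeg_1[OF U_Sdeg] W_subspace pfinite_Sdeg_1[OF W_Sdeg] U_inter_W]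
    setsum_U_W pdim_Sdeg_1[where 'n='n and 'k='k] by simp

lemma (in linear_decomp) card_ge_2_if_nontrivial:
  "U \<noteq> {0} \<Longrightarrow> W \<noteq> {0} \<Longrightarrow> 2 \<le> card (UNIV :: 'n set)"
  using pdim_U_add_pdim_W pdim_eq_0_imp[OF U_subspace pfinite_Sdeg_1[OF U_Sdeg]]
    pdim_eq_0_imp[OF W_subspace pfinite_Sdeg_1[OF W_Sdeg]] by linarith

lemma pdim_span_image_le:
  assumes T: "plinear T" and K: "plinear K" and X: "finite X" and ker: "\<And>x. K x = 0 \<Longrightarrow> T x = 0"
  shows "pdim (pspan (T ` X)) \<le> pdim (pspan (K ` X))"
proof -
  obtain C where C: "C \<subseteq> K ` X" "pvec.independent C" "K ` X \<subseteq> pspan C"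
    using pvec.maximal_independent_subset[of "K ` X"] by blast
  obtain C' where C': "C' \<subseteq> X" "inj_on K C'" "C = K ` C'"
    using subset_image_inj[of C K X] C(1) by blast
  have fin: "finite C'" using C'(1) X finite_subset by blast
  have "T ` X \<subseteq> pspan (T ` C')"
  proof
    fix z assume "z \<in> T ` X"
    then obtain x where x: "x \<in> X" "z = T x" by blast
    have "K x \<in> K ` pspan C'" using C(3) C'(3) x(1) module_hom.span_image[OF K] by blast
    then obtain y where y: "y \<in> pspan C'" "K x = K y" by blast
    then have "K (x - y) = 0" using module_hom.diff[OF K] by simp
    then have "T (x - y) = 0" by (rule ker)
    then have "T x = T y" using module_hom.diff[OF T] by simp
    then show "z \<in> pspan (T ` C')" using x(2) y(1) module_hom.span_image[OF T] by blast
  qed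
  then have "pdim (T ` X) \<le> card (T ` C')" using pvec.dim_le_card fin by blast
  also have "\<dots> \<le> card C'" using card_image_le[OF fin] .
  also have "\<dots> = pdim (pspan (K ` X))"
    using pvec.basis_card_eq_dim[OF C(1) C(3) C(2)] card_image[OF C'(2)] C'(3) by simp
  finally show ?thesis by simp
qed

text \<open>The map \<open>x \<mapsto> \<partial>\<^sub>x f\<close> vanishes on every direction at which all of \<open>U\<close> vanishes, i.e. on the
  kernel of \<open>x \<mapsto> \<Sum> u(x) u\<close> (sum over a basis of \<open>U\<close>), a map into \<open>U\<close>.\<close>

lemma pdim_grad_symp_le:
  fixes f :: "('n::finite, 'k::field) mpoly"
  assumes U: "psubspace U" "U \<subseteq> Sdeg 1" and f: "f \<in> symp U m"
  shows "pdim (grad_span f) \<le> pdim U"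
proof -
  obtain BU where BU: "BU \<subseteq> U" "pvec.independent BU" "U \<subseteq> pspan BU" "card BU = pdim U" "finite BU"
    by (rule pfinite_basis[OF pfinite_Sdeg_1[OF U(2)]])
  define T where "T x = dderiv (lin_coeff x) f" for x :: "('n, 'k) mpoly"
  define K where "K x = (\<Sum>u\<in>BU. psmult (lin_eval (lin_coeff x) u) u)" for x :: "('n, 'k) mpoly"
  have coeff_add: "lin_coeff (x + y) = (\<lambda>j. lin_coeff x j + lin_coeff y j)" for x y :: "('n, 'k) mpoly"
    by (auto simp: lin_coeff_add)
  have coeff_psmult: "lin_coeff (psmult c x) = (\<lambda>j. c * lin_coeff x j)" for c and x :: "('n, 'k) mpoly"
    by (auto simp: lin_coeff_psmult)
  have T: "plinear T"
    by (rule plinearI) (simp_all add: T_def coeff_add coeff_psmult dderiv_add_dir dderiv_scale_dir)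
  have K: "plinear K"
    by (rule plinearI) (simp_all add: K_def coeff_add coeff_psmult lin_eval_add_dir lin_eval_scale_dir
        pvec.scale_left_distrib sum.distrib psmult_sum flip: pvec.scale_scale)
  have ker: "T x = 0" if "K x = 0" for x
  proof -
    have "lin_eval (lin_coeff x) u = 0" if "u \<in> BU" for u
      using pvec.independentD[OF BU(2) BU(5) subset_refl \<open>K x = 0\<close>[unfolded K_def] that] .
    then have "dderiv (lin_coeff x) u = 0" if "u \<in> BU" for u
      using that BU(1) U(2) by (auto simp: dderiv_lin_form)
    then have "dderiv (lin_coeff x) u = 0" if "u \<in> U" for u
      using plinear_span_into[OF plinear_dderiv _ pvec.subspace_single_0] that BU(3) by blast
    then show "T x = 0" unfolding T_def by (rule dderiv_symp_eq_0[OF _ f])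
  qed
  have coeff_mvar: "lin_coeff (mvar i) = (\<lambda>j. if j = i then 1 else 0)" for i :: 'n
    by (auto simp: lin_coeff_mvar)
  have "pdim (pspan (T ` range mvar)) \<le> pdim (pspan (K ` range mvar))"
    by (rule pdim_span_image_le[OF T K]) (simp_all add: ker)
  moreover have "T ` range mvar = range (\<lambda>i. pd i f)"
    by (simp add: T_def coeff_mvar dderiv_unit image_image)
  moreover have "pspan (K ` range mvar) \<subseteq> U"
    using BU(1) by (intro pvec.span_minimal[OF _ U(1)])
      (auto simp: K_def intro!: pvec.subspace_sum[OF U(1)] pvec.subspace_scale[OF U(1)])
  then have "pdim (pspan (K ` range mvar)) \<le> pdim U"
    using pdim_mono pfinite_Sdeg_1[OF U(2)] by blast
  ultimately show ?thesis by (simp add: grad_span_def)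
qed

lemma pd_in_grad_span: "pd i f \<in> grad_span f"
  unfolding grad_span_def by (rule pvec.span_base) simp

lemma grad_span_subset: "(\<And>i. pd i f \<in> S) \<Longrightarrow> psubspace S \<Longrightarrow> grad_span f \<subseteq> S"
  unfolding grad_span_def by (rule pvec.span_minimal) auto

lemma pfinite_grad_span: "pfinite (grad_span (f :: ('n::finite, 'k::field) mpoly))"
  unfolding grad_span_def by (intro exI[of _ "range (\<lambda>i. pd i f)"]) simp

lemma grad_span_symp:
  fixes U :: "('n::finite, 'k::field) mpoly set"
  assumes "U \<subseteq> Sdeg 1" "g \<in> symp U (Suc d)"
  shows "grad_span g \<subseteq> symp U d"
proof (rule grad_span_subset[OF _ symp_subspace])
  show "pd i g \<in> symp U d" for i
    using dderiv_symp[OF assms, of "\<lambda>j. if j = i then 1 else 0"] by (simp add: dderiv_unit)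
qed

lemma pdim_grad_span_line_le_1:
  fixes l :: "('n::finite, 'k::field) mpoly"
  assumes "l \<in> Sdeg 1" "f \<in> symp (pspan {l}) m"
  shows "pdim (grad_span f) \<le> 1"
proof -
  have "pspan {l} \<subseteq> Sdeg 1" using assms(1) by (intro pvec.span_minimal[OF _ Sdeg_subspace]) simp
  then have "pdim (grad_span f) \<le> pdim (pspan {l})"
    using pdim_grad_symp_le[OF pvec.subspace_span _ assms(2)] by blast
  also have "\<dots> \<le> 1" using pvec.dim_le_card[of "pspan {l}" "{l}"] by simp
  finally show ?thesis .
qed

lemma grad_full_imp_nonzero:
  assumes "pdim (grad_span f) = card (UNIV :: 'n::finite set)"
  shows "f \<noteq> 0"
proof
  assume "f = 0"
  then have "grad_span f \<subseteq> {0}" by (intro grad_span_subset pvec.subspace_single_0) simp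
  then have "pdim (grad_span f) = 0" using pvec.dim_le_card[of "grad_span f" "{}"] by simp
  then show False using assms by simp
qed


lemma form_direct_sum_nontrivial:
  fixes f :: "('n, 'k::field) mpoly"
  assumes "form_direct_sum d f"
  obtains U W :: "('n, 'k) mpoly set" where "vdecomp U W" "U \<noteq> {0}" "W \<noteq> {0}"
proof -
  obtain U W :: "('n, 'k) mpoly set" and f1 f2 where UW: "vdecomp U W"
    and "f1 \<in> symp U (Suc d)" "f2 \<in> symp W (Suc d)" "f1 \<noteq> 0" "f2 \<noteq> 0"
    using assms unfolding form_direct_sum_def by auto
  then have "U \<noteq> {0}" "W \<noteq> {0}" using symp_zero_space[of d] by auto
  with UW show ?thesis by (rule that)
qed

context linear_decomp
begin

lemma grad_span_add_symp:
  assumes f1: "f1 \<in> symp U (Suc d)" and f2: "f2 \<in> symp W (Suc d)"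
  shows "grad_span (f1 + f2) = setsum (grad_span f1) (grad_span f2)"
proof
  show "grad_span (f1 + f2) \<subseteq> setsum (grad_span f1) (grad_span f2)"
  proof (rule grad_span_subset)
    show "psubspace (setsum (grad_span f1) (grad_span f2))"
      by (intro setsum_subspace) (simp_all add: grad_span_def)
    show "pd i (f1 + f2) \<in> setsum (grad_span f1) (grad_span f2)" for i
      using pd_in_grad_span[of i f1] pd_in_grad_span[of i f2] unfolding setsum_def pd_add by blast
  qed
  have "pd i f1 = dderiv (dual_proj U W i) (f1 + f2)" "pd i f2 = dderiv (dual_proj W U i) (f1 + f2)" for i
    using pd_split[of i] dderiv_dual_proj_symp_W[OF f2] linear_decomp.dderiv_dual_proj_symp_W[OF swap f1]
    by (simp_all add: dderiv_add)
  then have "grad_span f1 \<subseteq> grad_span (f1 + f2)" "grad_span f2 \<subseteq> grad_span (f1 + f2)"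
    by (intro grad_span_subset, simp add: dderiv_in_grad_span, simp add: grad_span_def)+
  moreover have "psubspace (grad_span (f1 + f2))" by (simp add: grad_span_def)
  ultimately show "setsum (grad_span f1) (grad_span f2) \<subseteq> grad_span (f1 + f2)"
    unfolding setsum_def using pvec.subspace_add by blast
qed

text \<open>The two summands have disjoint spaces of partials, each of dimension at most that of its
  half of \<open>V\<close>; if the partials of \<open>f\<close> span an \<open>n\<close>-dimensional space, both bounds are attained.\<close>

lemma balanced_if_form_split:
  assumes char: "(of_nat d :: 'k) \<noteq> 0"
    and grad: "pdim (grad_span f) = card (UNIV :: 'n set)"
    and f1: "f1 \<in> symp U (Suc d)" and f2: "f2 \<in> symp W (Suc d)" and f: "f = f1 + f2"
  shows "pdim (grad_span f1) = pdim U" "pdim (grad_span f2) = pdim W"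
proof -
  have L1: "grad_span f1 \<subseteq> symp U d" and L2: "grad_span f2 \<subseteq> symp W d"
    using grad_span_symp U_Sdeg W_Sdeg f1 f2 by blast+
  have "grad_span f1 \<inter> grad_span f2 = {0}"
    using L1 L2 symp_inter_eq_0[OF char] pvec.span_zero unfolding grad_span_def by blast
  then have "pdim (grad_span f) = pdim (grad_span f1) + pdim (grad_span f2)"
    unfolding f grad_span_add_symp[OF f1 f2]
    by (intro pdim_setsum pfinite_grad_span) (simp_all add: grad_span_def)
  moreover have "pdim (grad_span f1) \<le> pdim U" "pdim (grad_span f2) \<le> pdim W"
    using pdim_grad_symp_le U_subspace U_Sdeg W_subspace W_Sdeg f1 f2 by blast+
  ultimately show "pdim (grad_span f1) = pdim U" "pdim (grad_span f2) = pdim W"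
    using grad pdim_U_add_pdim_W by linarith+
qed

end

theorem form_direct_sum_imp_balanced:
  fixes f :: "('n::finite, 'k::field) mpoly"
  assumes char: "(of_nat d :: 'k) \<noteq> 0"
    and grad: "pdim (grad_span f) = card (UNIV :: 'n set)"
    and "form_direct_sum d f"
  shows "subsp_balanced_direct_sum d (grad_span f)"
proof -
  obtain U W f1 f2 where UW: "vdecomp U W" and f1: "f1 \<in> symp U (Suc d)" "f1 \<noteq> 0"
    and f2: "f2 \<in> symp W (Suc d)" "f2 \<noteq> 0" and f: "f = f1 + f2"
    using assms(3) unfolding form_direct_sum_def by auto
  interpret linear_decomp U W by (rule linear_decomp.intro[OF UW])
  have "U \<noteq> {0}" "W \<noteq> {0}" using f1 f2 symp_zero_space[of d] by auto
  moreover have "grad_span f1 \<subseteq> symp U d" "grad_span f2 \<subseteq> symp W d"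
    using grad_span_symp U_Sdeg W_Sdeg f1 f2 by blast+
  moreover have "psubspace (grad_span f1)" "psubspace (grad_span f2)" by (simp_all add: grad_span_def)
  moreover have "grad_span f = setsum (grad_span f1) (grad_span f2)"
    unfolding f by (rule grad_span_add_symp[OF f1(1) f2(1)])
  moreover have "pdim (grad_span f1) = pdim U" "pdim (grad_span f2) = pdim W"
    using balanced_if_form_split[OF char grad f1(1) f2(1) f] by simp_all
  ultimately show ?thesis
    unfolding subsp_balanced_direct_sum_def using UW grad pdim_U_add_pdim_W by metis
qed


context linear_decomp
begin

text \<open>Write \<open>\<partial>\<^sub>c f = a + b\<close> with \<open>a \<in> Sym\<^sup>d U\<close>, \<open>b \<in> Sym\<^sup>d W\<close>.  For a direction \<open>\<beta>\<close> killing \<open>U\<close>,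
  commuting \<open>\<partial>\<^sub>\<beta>\<close> with \<open>\<partial>\<^sub>c\<close> shows \<open>\<partial>\<^sub>\<beta> b = \<partial>\<^sub>c a'\<close> for the \<open>U\<close>-part \<open>a'\<close> of \<open>\<partial>\<^sub>\<beta> f\<close>; this
  lies in \<open>Sym\<^sup>d\<^sup>-\<^sup>1 U \<inter> Sym\<^sup>d\<^sup>-\<^sup>1 W = 0\<close>, so all partials of \<open>b\<close> vanish.\<close>

lemma dderiv_in_symp_if_grad_split:
  assumes char: "(of_nat (d - 1) :: 'k) \<noteq> 0" "(of_nat d :: 'k) \<noteq> 0" and d: "2 \<le> d"
    and grad: "grad_span f \<subseteq> setsum (symp U d) (symp W d)"
    and c: "\<And>w. w \<in> W \<Longrightarrow> dderiv c w = 0"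
  shows "dderiv c f \<in> symp U d"
proof -
  have split: "\<exists>a b. dderiv e f = a + b \<and> a \<in> symp U d \<and> b \<in> symp W d" for e
    using grad dderiv_in_grad_span[of e f] unfolding setsum_def by blast
  obtain a b where ab: "dderiv c f = a + b" "a \<in> symp U d" "b \<in> symp W d"
    using split by blast
  have d_Suc: "d = Suc (d - 1)" using d by simp
  have "pd j b = 0" for j
  proof -
    let ?\<beta> = "dual_proj W U j"
    obtain a' b' where ab': "dderiv ?\<beta> f = a' + b'" "a' \<in> symp U d" "b' \<in> symp W d"
      using split by blast
    have "dderiv ?\<beta> b = dderiv ?\<beta> (dderiv c f)"
      using linear_decomp.dderiv_dual_proj_symp_W[OF swap ab(2)] by (simp add: ab(1) dderiv_add)
    also have "\<dots> = dderiv c a'"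
      using dderiv_symp_eq_0[OF c ab'(3)] by (simp add: dderiv_commute ab'(1) dderiv_add)
    finally have "dderiv ?\<beta> b = dderiv c a'" .
    moreover have "dderiv c a' \<in> symp U (d - 1)" using dderiv_symp[OF U_Sdeg] ab'(2) d_Suc by metis
    moreover have "dderiv ?\<beta> b \<in> symp W (d - 1)" using dderiv_symp[OF W_Sdeg] ab(3) d_Suc by metis
    ultimately have "dderiv ?\<beta> b = 0" using symp_inter_eq_0[OF char(1)] by simp
    then show ?thesis using pd_split[of j b] dderiv_dual_proj_symp_W[OF ab(3)] by simp
  qed
  then have "b = 0" using Sdeg_eq_0_if_pd_eq_0[OF _ char(2)] symp_Sdeg[OF W_Sdeg] ab(3) by blast
  then show ?thesis using ab by simp
qed

text \<open>In \<open>euler_split\<close> every \<open>U\<close>-term is a linear form of \<open>U\<close> times an element of \<open>Sym\<^sup>d U\<close> (by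
  the previous lemma), and symmetrically for \<open>W\<close>.\<close>

lemma form_split_if_grad_split:
  assumes char: "(of_nat (d - 1) :: 'k) \<noteq> 0" "(of_nat d :: 'k) \<noteq> 0" "(of_nat (d + 1) :: 'k) \<noteq> 0"
    and d: "2 \<le> d" and hom: "f \<in> Sdeg (d + 1)"
    and grad: "grad_span f \<subseteq> setsum (symp U d) (symp W d)"
  obtains f1 f2 where "f1 \<in> symp U (d + 1)" "f2 \<in> symp W (d + 1)" "f = f1 + f2"
proof -
  have grad': "grad_span f \<subseteq> setsum (symp W d) (symp U d)"
    using grad setsum_commute by metis
  define c where "c = inverse (of_nat (d + 1) :: 'k)"
  define S1 where "S1 = (\<Sum>i\<in>UNIV. dproj U W (mvar i) * dderiv (dual_proj U W i) f)"
  define S2 where "S2 = (\<Sum>i\<in>UNIV. dproj W U (mvar i) * dderiv (dual_proj W U i) f)"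
  have S1: "S1 \<in> symp U (Suc d)"
    unfolding S1_def
    using dderiv_in_symp_if_grad_split[OF char(1,2) d grad dderiv_dual_proj_W]
      lin_mult_symp[OF dproj_mem(1)[OF mvar_Sdeg]]
    by (intro pvec.subspace_sum[OF symp_subspace]) blast
  have S2: "S2 \<in> symp W (Suc d)"
    unfolding S2_def
    using linear_decomp.dderiv_in_symp_if_grad_split[OF swap char(1,2) d grad'
        linear_decomp.dderiv_dual_proj_W[OF swap]]
      lin_mult_symp[OF linear_decomp.dproj_mem(1)[OF swap mvar_Sdeg]]
    by (intro pvec.subspace_sum[OF symp_subspace]) blast
  have "f = psmult c S1 + psmult c S2"
    using arg_cong[OF euler_split[OF hom], of "psmult c"] char(3)
    by (simp add: S1_def S2_def c_def pvec.scale_right_distrib del: of_nat_add)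
  then show ?thesis
    by (rule that[of "psmult c S1" "psmult c S2", rotated 2])
      (simp_all add: pvec.subspace_scale[OF symp_subspace S1] pvec.subspace_scale[OF symp_subspace S2])
qed

lemma grad_full_not_symp:
  assumes grad: "pdim (grad_span f) = card (UNIV :: 'n set)" and "U \<noteq> {0}"
  shows "f \<notin> symp W m"
proof
  assume "f \<in> symp W m"
  then have "pdim (grad_span f) \<le> pdim W" by (rule pdim_grad_symp_le[OF W_subspace W_Sdeg])
  moreover have "pdim U \<noteq> 0"
    using pdim_eq_0_imp[OF U_subspace pfinite_Sdeg_1[OF U_Sdeg]] \<open>U \<noteq> {0}\<close> by blast
  ultimately show False using grad pdim_U_add_pdim_W by linarith
qed

end

theorem grad_direct_sum_imp_form_direct_sum_ge_2:
  fixes f :: "('n::finite, 'k::field) mpoly"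
  assumes char: "(of_nat (d - 1) :: 'k) \<noteq> 0" "(of_nat d :: 'k) \<noteq> 0" "(of_nat (d + 1) :: 'k) \<noteq> 0"
    and d: "2 \<le> d" and hom: "f \<in> Sdeg (d + 1)"
    and grad: "pdim (grad_span f) = card (UNIV :: 'n set)"
    and "subsp_direct_sum d (grad_span f)"
  shows "form_direct_sum d f"
proof -
  obtain U W L1 L2 :: "('n, 'k) mpoly set" where UW: "vdecomp U W" "U \<noteq> {0}" "W \<noteq> {0}"
    and "L1 \<subseteq> symp U d" "L2 \<subseteq> symp W d" "grad_span f = setsum L1 L2"
    using assms(7) unfolding subsp_direct_sum_def by auto
  then have grad_split: "grad_span f \<subseteq> setsum (symp U d) (symp W d)"
    unfolding setsum_def by blast
  interpret linear_decomp U W by (rule linear_decomp.intro[OF UW(1)])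
  obtain f1 f2 where f1: "f1 \<in> symp U (d + 1)" and f2: "f2 \<in> symp W (d + 1)" and f: "f = f1 + f2"
    by (rule form_split_if_grad_split[OF char d hom grad_split])
  have "f1 \<noteq> 0" using grad_full_not_symp[OF grad UW(2)] f f2 by auto
  moreover have "f2 \<noteq> 0" using linear_decomp.grad_full_not_symp[OF swap grad UW(3)] f f1 by auto
  ultimately show ?thesis unfolding form_direct_sum_def using UW(1) f1 f2 f by blast
qed


section \<open>Quadratic forms\<close>

text \<open>Polarization: if \<open>\<partial>\<^sub>v\<^sup>2 f = 0\<close> for all \<open>v\<close>, then \<open>2 \<partial>\<^sub>i \<partial>\<^sub>j f = \<partial>\<^sub>e\<^sup>2 f - \<partial>\<^sub>i\<^sup>2 f - \<partial>\<^sub>j\<^sup>2 f = 0\<close> with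
  \<open>e = e\<^sub>i + e\<^sub>j\<close>, and Euler's identity (twice) gives \<open>f = 0\<close>.\<close>

lemma exists_dderiv_dderiv_neq_0:
  fixes f :: "('n::finite, 'k::field) mpoly"
  assumes two: "(2 :: 'k) \<noteq> 0" and hom: "f \<in> Sdeg 2" and "f \<noteq> 0"
  shows "\<exists>v. dderiv v (dderiv v f) \<noteq> 0"
proof (rule ccontr)
  assume "\<nexists>v. dderiv v (dderiv v f) \<noteq> 0"
  then have all: "dderiv v (dderiv v f) = 0" for v by blast
  let ?e = "\<lambda>i k. if k = i then 1 else (0::'k)"
  have "pd i (pd j f) = 0" for i j
  proof -
    have "psmult 2 (pd i (pd j f)) = dderiv (\<lambda>k. ?e i k + ?e j k) (dderiv (\<lambda>k. ?e i k + ?e j k) f)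
        - dderiv (?e i) (dderiv (?e i) f) - dderiv (?e j) (dderiv (?e j) f)"
      by (simp add: dderiv_add_dir dderiv_unit pd_add pd_commute[of j i] psmult_two)
    then show ?thesis using all two by simp
  qed
  then have "pd j f = 0" for j
    using Sdeg_eq_0_if_pd_eq_0[of "pd j f" 1] pd_Sdeg[OF hom, of j] by simp
  then show False using Sdeg_eq_0_if_pd_eq_0[OF hom] two \<open>f \<noteq> 0\<close> by simp
qed

lemma vdecomp_line_hyperplane:
  fixes l :: "('n::finite, 'k::field) mpoly"
  assumes l: "l \<in> Sdeg 1" and a: "lin_eval v l \<noteq> 0"
  shows "vdecomp (pspan {l}) {m \<in> Sdeg 1. lin_eval v m = 0}"
proof -
  let ?U = "pspan {l}" and ?W = "{m \<in> Sdeg 1. lin_eval v m = 0}"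
  have W: "psubspace ?W"
    using pvec.subspace_0[OF Sdeg_subspace[of 1]] pvec.subspace_add[OF Sdeg_subspace[of 1]]
      pvec.subspace_scale[OF Sdeg_subspace[of 1]]
    by (intro pvec.subspaceI) (auto simp: lin_eval_add lin_eval_psmult)
  have U: "?U \<subseteq> Sdeg 1" using l by (intro pvec.span_minimal[OF _ Sdeg_subspace]) simp
  have "?U \<inter> ?W \<subseteq> {0}"
  proof
    fix x assume x: "x \<in> ?U \<inter> ?W"
    then obtain t where "x = psmult t l" using pvec.span_singleton by blast
    with x a show "x \<in> {0}" by (simp add: lin_eval_psmult)
  qed
  then have "?U \<inter> ?W = {0}" using pvec.subspace_0[OF W] pvec.span_zero by blast
  moreover have "Sdeg 1 \<subseteq> setsum ?U ?W"
  proof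
    fix m :: "('n, 'k) mpoly" assume m: "m \<in> Sdeg 1"
    let ?t = "lin_eval v m / lin_eval v l"
    have "psmult ?t l \<in> ?U" by (simp add: pvec.span_scale pvec.span_base)
    moreover have "m - psmult ?t l \<in> Sdeg 1"
      by (intro pvec.subspace_diff[OF Sdeg_subspace] pvec.subspace_scale[OF Sdeg_subspace] m l)
    then have "m - psmult ?t l \<in> ?W" using a by (simp add: lin_eval_diff lin_eval_psmult)
    moreover have "m = psmult ?t l + (m - psmult ?t l)" by simp
    ultimately show "m \<in> setsum ?U ?W" unfolding setsum_def by blast
  qed
  moreover have "setsum ?U ?W \<subseteq> Sdeg 1"
    unfolding setsum_def using U pvec.subspace_add[OF Sdeg_subspace[of 1]] by blast
  ultimately show ?thesis unfolding vdecomp_def using W U by auto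
qed

lemma dual_proj_line_hyperplane:
  fixes l :: "('n::finite, 'k::field) mpoly"
  assumes l: "l \<in> Sdeg 1" and a: "lin_eval v l \<noteq> 0"
  shows "dual_proj (pspan {l}) {m \<in> Sdeg 1. lin_eval v m = 0} i = (\<lambda>j. lin_coeff l i / lin_eval v l * v j)"
proof
  fix j
  interpret linear_decomp "pspan {l}" "{m \<in> Sdeg 1. lin_eval v m = 0}"
    by (rule linear_decomp.intro[OF vdecomp_line_hyperplane[OF l a]])
  let ?t = "v j / lin_eval v l"
  have "psmult ?t l \<in> pspan {l}" by (simp add: pvec.span_scale pvec.span_base)
  moreover have "mvar j - psmult ?t l \<in> Sdeg 1"
    by (intro pvec.subspace_diff[OF Sdeg_subspace] pvec.subspace_scale[OF Sdeg_subspace] mvar_Sdeg l)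
  then have "mvar j - psmult ?t l \<in> {m \<in> Sdeg 1. lin_eval v m = 0}"
    using a by (simp add: lin_eval_diff lin_eval_psmult lin_eval_mvar)
  ultimately have "dproj (pspan {l}) {m \<in> Sdeg 1. lin_eval v m = 0} (mvar j) = psmult ?t l"
    using dproj_eq by fastforce
  then show "dual_proj (pspan {l}) {m \<in> Sdeg 1. lin_eval v m = 0} i j = lin_coeff l i / lin_eval v l * v j"
    by (simp add: dual_proj_def lin_coeff_psmult)
qed

text \<open>A form annihilated by \<open>\<partial>\<^sub>v\<close> only involves linear forms vanishing at \<open>v\<close>: by
  \<open>dual_proj_line_hyperplane\<close>, \<open>euler_split\<close> for \<open>k l \<oplus> v\<^sup>\<bottom>\<close> has no \<open>l\<close>-part.\<close>

lemma symp_hyperplane_if_dderiv_eq_0: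
  fixes l :: "('n::finite, 'k::field) mpoly"
  assumes l: "l \<in> Sdeg 1" and a: "lin_eval v l \<noteq> 0"
  shows "(\<And>k. 1 \<le> k \<Longrightarrow> k \<le> m \<Longrightarrow> (of_nat k :: 'k) \<noteq> 0) \<Longrightarrow> g \<in> Sdeg m \<Longrightarrow> dderiv v g = 0 \<Longrightarrow>
    g \<in> symp {m \<in> Sdeg 1. lin_eval v m = 0} m"
proof (induction m arbitrary: g)
  case 0
  have "g = psmult (Poly_Mapping.lookup g 0) (prod_list [])"
    using Sdeg_0_eq_const[OF 0(2)] by (simp add: psmult_conv_mult)
  then show ?case using pvec.subspace_scale[OF symp_subspace prod_list_in_symp] by (metis list.size(3) empty_set empty_subsetI)
next
  case (Suc m)
  let ?U = "pspan {l}" and ?W = "{m \<in> Sdeg 1. lin_eval v m = 0}"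
  interpret linear_decomp ?U ?W by (rule linear_decomp.intro[OF vdecomp_line_hyperplane[OF l a]])
  interpret swapped: linear_decomp ?W ?U by (rule swap)
  have "dderiv (dual_proj ?U ?W i) g = 0" for i
    using Suc.prems(3) unfolding dual_proj_line_hyperplane[OF l a] dderiv_scale_dir by simp
  then have "psmult (of_nat (Suc m)) g = (\<Sum>i\<in>UNIV. dproj ?W ?U (mvar i) * dderiv (dual_proj ?W ?U i) g)"
    using euler_split[OF Suc.prems(2)] by simp
  also have "\<dots> \<in> symp ?W (Suc m)"
  proof (rule pvec.subspace_sum[OF symp_subspace])
    fix i
    have "dderiv (dual_proj ?W ?U i) g \<in> Sdeg m" using dderiv_Sdeg[OF Suc.prems(2)] by simp
    moreover have "dderiv v (dderiv (dual_proj ?W ?U i) g) = 0"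
      using Suc.prems(3) by (simp add: dderiv_commute[of v])
    ultimately have "dderiv (dual_proj ?W ?U i) g \<in> symp ?W m" using Suc.IH Suc.prems(1) by simp
    then show "dproj ?W ?U (mvar i) * dderiv (dual_proj ?W ?U i) g \<in> symp ?W (Suc m)"
      by (rule lin_mult_symp[OF swapped.dproj_mem(1)[OF mvar_Sdeg]])
  qed
  finally have "psmult (inverse (of_nat (Suc m))) (psmult (of_nat (Suc m)) g) \<in> symp ?W (Suc m)"
    by (rule pvec.subspace_scale[OF symp_subspace])
  moreover have "(of_nat (Suc m) :: 'k) \<noteq> 0" using Suc.prems(1)[of "Suc m"] by simp
  ultimately show ?case by (simp del: of_nat_Suc)
qed

lemma dderiv_square_lin_form: "l \<in> Sdeg 1 \<Longrightarrow> dderiv v (l * l) = psmult (2 * lin_eval v l) l"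
proof -
  assume "l \<in> Sdeg 1"
  then have "dderiv v (l * l) = psmult (lin_eval v l) l + psmult (lin_eval v l) l"
    by (simp add: dderiv_mult dderiv_lin_form psmult_conv_mult mult.commute)
  then show ?thesis by (simp only: mult_2 pvec.scale_left_distrib)
qed

text \<open>Choose \<open>v\<close> with \<open>\<partial>\<^sub>v\<^sup>2 f \<noteq> 0\<close> and put \<open>l = \<partial>\<^sub>v f\<close>.  Then \<open>f\<^sub>1 = l\<^sup>2 / (2 l(v))\<close> has the same
  \<open>v\<close>-derivative as \<open>f\<close>, so \<open>f - f\<^sub>1\<close> is a quadratic form on the hyperplane \<open>v\<^sup>\<bottom>\<close>.\<close>

theorem quadratic_form_direct_sum:
  fixes f :: "('n::finite, 'k::field) mpoly"
  assumes two: "(2 :: 'k) \<noteq> 0" and hom: "f \<in> Sdeg 2"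
    and grad: "pdim (grad_span f) = card (UNIV :: 'n set)" and n: "2 \<le> card (UNIV :: 'n set)"
  shows "form_direct_sum 1 f"
proof -
  obtain v where v: "dderiv v (dderiv v f) \<noteq> 0"
    using exists_dderiv_dderiv_neq_0[OF two hom grad_full_imp_nonzero[OF grad]] by blast
  define l where "l = dderiv v f"
  define a where "a = lin_eval v l"
  have l: "l \<in> Sdeg 1" unfolding l_def using dderiv_Sdeg[OF hom, of v] by simp
  have Dl: "dderiv v l = Poly_Mapping.single 0 a" unfolding a_def by (rule dderiv_lin_form[OF l])
  have a: "a \<noteq> 0" using v Dl unfolding l_def by auto
  let ?U = "pspan {l}" and ?W = "{m \<in> Sdeg 1. lin_eval v m = 0}"
  define f1 where "f1 = psmult (inverse (2 * a)) (l * l)"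
  define f2 where "f2 = f - f1"
  have Df1: "dderiv v f1 = l"
    using two a dderiv_square_lin_form[OF l, of v] by (simp add: f1_def dderiv_psmult a_def)
  have f1: "f1 \<in> symp ?U 2"
    using prod_list_in_symp[of "[l, l]" 2 ?U] pvec.subspace_scale[OF symp_subspace]
    by (simp add: f1_def pvec.span_base)
  have "l * l \<in> Sdeg 2" using Sdeg_mult[OF l l] by (simp add: numeral_2_eq_2)
  then have "f2 \<in> Sdeg 2"
    unfolding f2_def f1_def by (intro pvec.subspace_diff[OF Sdeg_subspace] pvec.subspace_scale[OF Sdeg_subspace] hom)
  moreover have "dderiv v f2 = 0" by (simp add: f2_def dderiv_diff Df1 l_def)
  ultimately have f2: "f2 \<in> symp ?W 2"
  proof (intro symp_hyperplane_if_dderiv_eq_0[OF l a[unfolded a_def]])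
    fix k :: nat
    assume "1 \<le> k" "k \<le> 2"
    then have "k = 1 \<or> k = 2" by auto
    then show "(of_nat k :: 'k) \<noteq> 0" using two by auto
  qed
  have "f1 \<noteq> 0" using Df1 v l_def by auto
  moreover have "f2 \<noteq> 0"
    using pdim_grad_span_line_le_1[OF l f1] grad n by (auto simp: f2_def)
  moreover have "f = f1 + f2" by (simp add: f2_def)
  ultimately show ?thesis
    unfolding form_direct_sum_def one_add_one
    using vdecomp_line_hyperplane[OF l a[unfolded a_def]] f1 f2 by blast
qed


lemma of_nat_neq_0_if_fact_neq_0:
  assumes "(of_nat (fact n) :: 'k::field) \<noteq> 0" "1 \<le> m" "m \<le> n"
  shows "(of_nat m :: 'k) \<noteq> 0"
proof -
  obtain k where "fact n = m * k" using dvd_fact[OF assms(2,3)] by blast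
  then show ?thesis using assms(1) by auto
qed

lemma subsp_balanced_direct_sum_imp_direct_sum:
  "subsp_balanced_direct_sum d L \<Longrightarrow> subsp_direct_sum d L"
  unfolding subsp_balanced_direct_sum_def subsp_direct_sum_def by blast

lemma card_ge_2_if_direct_sum:
  fixes f :: "('n::finite, 'k::field) mpoly"
  assumes "form_direct_sum d f \<or> subsp_direct_sum d (grad_span f)"
  shows "2 \<le> card (UNIV :: 'n set)"
proof -
  obtain U W :: "('n, 'k) mpoly set" where "vdecomp U W" "U \<noteq> {0}" "W \<noteq> {0}"
    using assms form_direct_sum_nontrivial unfolding subsp_direct_sum_def by metis
  then show ?thesis by (metis linear_decomp.card_ge_2_if_nontrivial linear_decomp.intro)
qed

lemma pdim_grad_span_lin_form_le_1:
  "f \<in> Sdeg 1 \<Longrightarrow> pdim (grad_span (f :: ('n::finite, 'k::field) mpoly)) \<le> 1"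
  using pdim_grad_span_line_le_1[of f f 1] prod_list_in_symp[of "[f]" 1 "pspan {f}"]
  by (simp add: pvec.span_base)

lemma grad_direct_sum_imp_form_direct_sum:
  fixes f :: "('n::finite, 'k::field) mpoly"
  assumes of_nat: "\<And>m. 1 \<le> m \<Longrightarrow> m \<le> d + 1 \<Longrightarrow> (of_nat m :: 'k) \<noteq> 0"
    and "d \<noteq> 0" and hom: "f \<in> Sdeg (d + 1)"
    and grad: "pdim (grad_span f) = card (UNIV :: 'n set)"
    and sum: "subsp_direct_sum d (grad_span f)"
  shows "form_direct_sum d f"
proof (cases "d = 1")
  case True
  have "(2 :: 'k) \<noteq> 0" using of_nat[of 2] True by simp
  moreover have "2 \<le> card (UNIV :: 'n set)" using card_ge_2_if_direct_sum sum by blast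
  moreover have "f \<in> Sdeg 2" using hom True by (simp add: numeral_2_eq_2)
  ultimately show ?thesis using quadratic_form_direct_sum[OF _ _ grad] True by simp
next
  case False
  with \<open>d \<noteq> 0\<close> show ?thesis
    by (intro grad_direct_sum_imp_form_direct_sum_ge_2[OF of_nat of_nat of_nat _ hom grad sum]) auto
qed

theorem lemma2p2:
  fixes f :: "('n::finite, 'k::field) mpoly" and d :: nat
  assumes char: "(of_nat (fact (d + 1)) :: 'k) \<noteq> 0"
    and hom: "f \<in> Sdeg (d + 1)"
    and grad: "pdim (grad_span f) = card (UNIV :: 'n set)"
  shows "(form_direct_sum d f \<longleftrightarrow> subsp_direct_sum d (grad_span f)) \<and>
         (subsp_direct_sum d (grad_span f) \<longleftrightarrow> subsp_balanced_direct_sum d (grad_span f))"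
proof (cases "d = 0")
  case True
  then have "\<not> form_direct_sum d f" "\<not> subsp_direct_sum d (grad_span f)"
    using card_ge_2_if_direct_sum pdim_grad_span_lin_form_le_1 hom grad by fastforce+
  then show ?thesis using subsp_balanced_direct_sum_imp_direct_sum by blast
next
  case False
  have of_nat: "(of_nat m :: 'k) \<noteq> 0" if "1 \<le> m" "m \<le> d + 1" for m
    using of_nat_neq_0_if_fact_neq_0[OF char that] .
  have "subsp_direct_sum d (grad_span f) \<Longrightarrow> form_direct_sum d f"
    by (rule grad_direct_sum_imp_form_direct_sum[OF of_nat False hom grad])
  moreover have "form_direct_sum d f \<Longrightarrow> subsp_balanced_direct_sum d (grad_span f)"
    using False by (intro form_direct_sum_imp_balanced[OF of_nat grad]) auto
  ultimately show ?thesis using subsp_balanced_direct_sum_imp_direct_sum by blast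
qed

end
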